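(* Let $(X_{1,\infty},f_{1,\infty})$ be a topological nonautonomous dynamical system with an $f_{1,\infty}$-invariant sequence $\mu_{1,\infty}$ of Borel probability measures. If $f_{1,\infty}$ is equicontinuous, then the Misiurewicz class $\mathcal{E}_{\mathrm{M}}$ is an admissible class.
   Context: Topological NDS: compact metric spaces $(X_n,\varrho_n)$ and continuous maps $f_n:X_n\to X_{n+1}$; $f_k^n=f_{k+n-1}\circ\cdots\circ f_k$, $f_k^{-n}$ = preimage under $f_k^n$. Invariance: $f_n\mu_n=\mu_{n+1}$. Equicontinuity: for every $\varepsilon>0$ there is $\delta>0$ with $\varrho_{n+1}(f_n x,f_n y)<\varepsilon$ whenever $\varrho_n(x,y)<\delta$, for all $n$ and $x,y\in X_n$. Admissible class: a nonempty class $\mathcal{E}$ of sequences $\{\mathcal{P}_n\}$ of finite Borel partitions of $X_n$ such that (A) each member has $\#\mathcal{P}_n\le N$ for some $N$ and all $n$; (B) $\mathcal{E}$ is closed under passing to termwise coarser sequences; (C) if $\mathcal{P}_{1,\infty}\in\mathcal{E}$ and $m\ge1$ then $\{\bigvee_{i=0}^{m-1}f_k^{-i}\mathcal{P}_{k+i}\}_{k\ge1}\in\mathcal{E}$. Misiurewicz class $\mathcal{E}_{\mathrm{M}}$: the set of sequences $\{\mathcal{P}_n\}$ of finite Borel partitions $\mathcal{P}_n=\{P_{n,1},\dots,P_{n,k_n}\}$ with $\sup_nk_n<\infty$ such that for every $\varepsilon>0$ there exist $\delta>0$ and compact sets $C_{n,i}\subset P_{n,i}$ with, for all $n$: (a)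 $\mu_n(P_{n,i}\setminus C_{n,i})\le\varepsilon$ for all $i$; (b) $\varrho_n(x,y)\ge\delta$ for all $x\in C_{n,i}$, $y\in C_{n,j}$, $i\neq j$. *)

theory Defs
  imports "HOL-Probability.Probability"
begin

text \<open>A topological NDS: spaces X n (compact subsets of a common metric space
  type, carrying the restricted metric), maps f n : X n -> X (n+1).
  Indices start at 0 instead of 1.\<close>

definition nds :: "(nat \<Rightarrow> 'a::metric_space set) \<Rightarrow> (nat \<Rightarrow> 'a \<Rightarrow> 'a) \<Rightarrow> bool" where
  "nds X f \<longleftrightarrow> (\<forall>n. compact (X n) \<and> continuous_on (X n) (f n) \<and> f n ` X n \<subseteq> X (Suc n))"

fun fiter :: "(nat \<Rightarrow> 'a \<Rightarrow> 'a) \<Rightarrow> nat \<Rightarrow> nat \<Rightarrow> 'a \<Rightarrow> 'a" where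
  "fiter f k 0 = id"
| "fiter f k (Suc i) = f (k + i) \<circ> fiter f k i"

definition invariant_measures ::
  "(nat \<Rightarrow> 'a::metric_space set) \<Rightarrow> (nat \<Rightarrow> 'a \<Rightarrow> 'a) \<Rightarrow> (nat \<Rightarrow> 'a measure) \<Rightarrow> bool" where
  "invariant_measures X f \<mu> \<longleftrightarrow>
     (\<forall>n. prob_space (\<mu> n) \<and> space (\<mu> n) = X n \<and>
          sets (\<mu> n) = sets (restrict_space borel (X n)) \<and>
          distr (\<mu> n) (\<mu> (Suc n)) (f n) = \<mu> (Suc n))"

definition equicontinuous_nds :: "(nat \<Rightarrow> 'a::metric_space set) \<Rightarrow> (nat \<Rightarrow> 'a \<Rightarrow> 'a) \<Rightarrow> bool" where
  "equicontinuous_nds X f \<longleftrightarrow>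
     (\<forall>\<epsilon>>0. \<exists>\<delta>>0. \<forall>n. \<forall>x\<in>X n. \<forall>y\<in>X n. dist x y < \<delta> \<longrightarrow> dist (f n x) (f n y) < \<epsilon>)"

definition borel_partition :: "'a::topological_space set \<Rightarrow> 'a set set \<Rightarrow> bool" where
  "borel_partition S P \<longleftrightarrow> finite P \<and> \<Union>P = S \<and> {} \<notin> P \<and>
     (\<forall>A\<in>P. A \<in> sets (restrict_space borel S)) \<and>
     (\<forall>A\<in>P. \<forall>B\<in>P. A \<noteq> B \<longrightarrow> A \<inter> B = {})"

definition partition_seq :: "(nat \<Rightarrow> 'a::topological_space set) \<Rightarrow> (nat \<Rightarrow> 'a set set) \<Rightarrow> bool" where
  "partition_seq X P \<longleftrightarrow> (\<forall>n. borel_partition (X n) (P n))"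

definition coarser :: "'a set set \<Rightarrow> 'a set set \<Rightarrow> bool" where
  "coarser Q P \<longleftrightarrow> (\<forall>A\<in>P. \<exists>B\<in>Q. A \<subseteq> B)"

definition join :: "'a set set \<Rightarrow> 'a set set \<Rightarrow> 'a set set" where
  "join P Q = {A \<inter> B | A B. A \<in> P \<and> B \<in> Q} - {{}}"

definition preim_part :: "'a set \<Rightarrow> ('a \<Rightarrow> 'a) \<Rightarrow> 'a set set \<Rightarrow> 'a set set" where
  "preim_part S g P = {g -` A \<inter> S | A. A \<in> P} - {{}}"

fun bigjoin :: "(nat \<Rightarrow> 'a set) \<Rightarrow> (nat \<Rightarrow> 'a \<Rightarrow> 'a) \<Rightarrow> (nat \<Rightarrow> 'a set set) \<Rightarrow> nat \<Rightarrow> nat \<Rightarrow> 'a set set" where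
  "bigjoin X f P k 0 = {X k}"
| "bigjoin X f P k (Suc i) = join (bigjoin X f P k i) (preim_part (X k) (fiter f k i) (P (k + i)))"

definition admissible_class ::
  "(nat \<Rightarrow> 'a::metric_space set) \<Rightarrow> (nat \<Rightarrow> 'a \<Rightarrow> 'a) \<Rightarrow> (nat \<Rightarrow> 'a set set) set \<Rightarrow> bool" where
  "admissible_class X f \<E> \<longleftrightarrow>
     \<E> \<noteq> {} \<and> (\<forall>P\<in>\<E>. partition_seq X P) \<and>
     (\<forall>P\<in>\<E>. \<exists>N::nat. \<forall>n. card (P n) \<le> N) \<and>
     (\<forall>P\<in>\<E>. \<forall>Q. partition_seq X Q \<and> (\<forall>n. coarser (Q n) (P n)) \<longrightarrow> Q \<in> \<E>) \<and>
     (\<forall>P\<in>\<E>. \<forall>m\<ge>1. (\<lambda>k. bigjoin X f P k m) \<in> \<E>)"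

definition misiurewicz_class ::
  "(nat \<Rightarrow> 'a::metric_space set) \<Rightarrow> (nat \<Rightarrow> 'a measure) \<Rightarrow> (nat \<Rightarrow> 'a set set) set" where
  "misiurewicz_class X \<mu> = {P. partition_seq X P \<and> (\<exists>N::nat. \<forall>n. card (P n) \<le> N) \<and>
     (\<forall>\<epsilon>>0. \<exists>\<delta>>0. \<exists>C :: nat \<Rightarrow> 'a set \<Rightarrow> 'a set. \<forall>n. \<forall>A\<in>P n.
         C n A \<subseteq> A \<and> compact (C n A) \<and> measure (\<mu> n) (A - C n A) \<le> \<epsilon> \<and>
         (\<forall>B\<in>P n. A \<noteq> B \<longrightarrow> (\<forall>x\<in>C n A. \<forall>y\<in>C n B. dist x y \<ge> \<delta>)))}"

end

theory Submission
  imports Defs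
begin

text \<open>A partition sequence belongs to the Misiurewicz class iff for every \<open>\<epsilon>\<close> there are closed
  "cores" \<open>G n \<subseteq> X n\<close> of measure at least \<open>1 - \<epsilon>\<close> on which distinct members of \<open>P n\<close> are uniformly
  \<open>\<delta>\<close>-separated: the compact sets \<open>C n A\<close> are recovered as \<open>A \<inter> G n\<close>. Coarsening keeps the cores.
  For the join over \<open>i < m\<close> one takes as core the points whose first \<open>m\<close> iterates lie in the cores
  of \<open>P\<close>; by invariance of \<open>\<mu>\<close> its complement has measure at most \<open>m \<epsilon>\<close>, and by equicontinuity
  points of it that are close have iterates that are close, hence lie in the same member of
  each \<open>P (k+i)\<close>, hence in the same member of the join.\<close>

lemma closed_in_sets_restrict_borel:
  fixes K :: "'a::topological_space set"
  assumes "closed K" "K \<subseteq> S"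
  shows "K \<in> sets (restrict_space borel S)"
proof -
  have "K = S \<inter> K" using assms(2) by blast
  then show ?thesis using borel_closed[OF assms(1)] unfolding sets_restrict_space by blast
qed

lemma space_in_sets_restrict_borel: "S \<in> sets (restrict_space borel S)"
  using sets.top[of "restrict_space borel S"] by (simp add: space_restrict_space)

definition borel_probability_on :: "'a::topological_space set \<Rightarrow> 'a measure \<Rightarrow> bool" where
  "borel_probability_on S M \<longleftrightarrow>
     prob_space M \<and> space M = S \<and> sets M = sets (restrict_space borel S)"

lemma invariant_measures_borel_probability_on:
  "invariant_measures X f \<mu> \<Longrightarrow> borel_probability_on (X n) (\<mu> n)"
  unfolding invariant_measures_def borel_probability_on_def by blast

lemma borel_probability_on_nonempty: "borel_probability_on S M \<Longrightarrow> S \<noteq> {}"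
  unfolding borel_probability_on_def using prob_space.not_empty by blast

subsection \<open>Iterates of a nonautonomous system\<close>

lemma fiter_in:
  assumes "nds X f" "x \<in> X k"
  shows "fiter f k i x \<in> X (k + i)"
  using assms(2)
proof (induction i)
  case (Suc i)
  then show ?case using assms(1) unfolding nds_def by auto
qed simp

lemma continuous_on_fiter:
  assumes "nds X f"
  shows "continuous_on (X k) (fiter f k i)"
proof (induction i)
  case 0
  then show ?case by simp
next
  case (Suc i)
  have "continuous_on (fiter f k i ` X k) (f (k + i))"
    using assms fiter_in[OF assms] unfolding nds_def by (blast intro: continuous_on_subset)
  then show ?case using continuous_on_compose[OF Suc.IH] by simp
qed

lemma fiter_measurable:
  assumes "nds X f"
  shows "fiter f k i \<in> measurable (restrict_space borel (X k)) (restrict_space borel (X (k + i)))"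
  using fiter_in[OF assms]
  by (intro measurable_restrict_space2 borel_measurable_continuous_on_restrict continuous_on_fiter assms)
    (auto simp: space_restrict_space)

lemma fiter_preimage_in_sets:
  assumes "nds X f" "E \<in> sets (restrict_space borel (X (k + i)))"
  shows "fiter f k i -` E \<inter> X k \<in> sets (restrict_space borel (X k))"
  using measurable_sets[OF fiter_measurable[OF assms(1)] assms(2)] by (simp add: space_restrict_space)

lemma measure_preimage_step:
  assumes "nds X f" "invariant_measures X f \<mu>" "E \<in> sets (restrict_space borel (X (Suc n)))"
  shows "measure (\<mu> n) (f n -` E \<inter> X n) = measure (\<mu> (Suc n)) E"
proof -
  have \<mu>: "space (\<mu> n) = X n" "sets (\<mu> n) = sets (restrict_space borel (X n))"
    "sets (\<mu> (Suc n)) = sets (restrict_space borel (X (Suc n)))"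
    "distr (\<mu> n) (\<mu> (Suc n)) (f n) = \<mu> (Suc n)"
    using assms(2) unfolding invariant_measures_def by blast+
  have "f n \<in> measurable (\<mu> n) (\<mu> (Suc n))"
    using fiter_measurable[OF assms(1), of n 1] \<mu>(2,3) measurable_cong_sets by (simp add: comp_def)
  then show ?thesis
    using measure_distr[of "f n" "\<mu> n" "\<mu> (Suc n)" E] \<mu> assms(3) by simp
qed

lemma measure_fiter_preimage:
  assumes "nds X f" "invariant_measures X f \<mu>" "E \<in> sets (restrict_space borel (X (k + i)))"
  shows "measure (\<mu> k) (fiter f k i -` E \<inter> X k) = measure (\<mu> (k + i)) E"
  using assms(3)
proof (induction i arbitrary: E)
  case 0
  then have "E \<subseteq> X k" using sets.sets_into_space by (fastforce simp: space_restrict_space)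
  then show ?case by (simp add: Int_absorb2)
next
  case (Suc i)
  let ?F = "f (k + i) -` E \<inter> X (k + i)"
  have F: "?F \<in> sets (restrict_space borel (X (k + i)))"
    using fiter_preimage_in_sets[OF assms(1), of E "k + i" 1] Suc.prems by simp
  have "fiter f k (Suc i) -` E \<inter> X k = fiter f k i -` ?F \<inter> X k"
    using fiter_in[OF assms(1)] by auto
  also have "measure (\<mu> k) \<dots> = measure (\<mu> (k + i)) ?F"
    by (rule Suc.IH[OF F])
  also have "\<dots> = measure (\<mu> (k + Suc i)) E"
    using measure_preimage_step[OF assms(1,2)] Suc.prems by simp
  finally show ?case .
qed

lemma uniformly_equicontinuous_fiter:
  assumes "nds X f" "equicontinuous_nds X f" "e > 0"
  shows "\<exists>d>0. \<forall>k. \<forall>x\<in>X k. \<forall>y\<in>X k. dist x y < d \<longrightarrow> dist (fiter f k i x) (fiter f k i y) < e"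
  using assms(3)
proof (induction i arbitrary: e)
  case 0
  then show ?case by (intro exI[of _ e]) simp
next
  case (Suc i)
  obtain d1 where "d1 > 0"
    and d1: "\<forall>n. \<forall>x\<in>X n. \<forall>y\<in>X n. dist x y < d1 \<longrightarrow> dist (f n x) (f n y) < e"
    using assms(2) Suc.prems unfolding equicontinuous_nds_def by blast
  obtain d where "d > 0"
    and d: "\<forall>k. \<forall>x\<in>X k. \<forall>y\<in>X k. dist x y < d \<longrightarrow> dist (fiter f k i x) (fiter f k i y) < d1"
    using Suc.IH[OF \<open>d1 > 0\<close>] by blast
  show ?case
  proof (intro exI[of _ d] conjI allI ballI impI)
    fix k x y
    assume "x \<in> X k" "y \<in> X k" "dist x y < d"
    then have "dist (fiter f k i x) (fiter f k i y) < d1"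
      using d by blast
    then show "dist (fiter f k (Suc i) x) (fiter f k (Suc i) y) < e"
      using d1 fiter_in[OF assms(1) \<open>x \<in> X k\<close>] fiter_in[OF assms(1) \<open>y \<in> X k\<close>] by auto
  qed (fact \<open>d > 0\<close>)
qed

lemma uniformly_equicontinuous_fiters:
  assumes "nds X f" "equicontinuous_nds X f" "e > 0"
  shows "\<exists>d>0. \<forall>i<m. \<forall>k. \<forall>x\<in>X k. \<forall>y\<in>X k. dist x y < d \<longrightarrow> dist (fiter f k i x) (fiter f k i y) < e"
proof (induction m)
  case 0
  then show ?case by (intro exI[of _ 1]) auto
next
  case (Suc m)
  obtain d1 where "d1 > 0"
    and "\<forall>i<m. \<forall>k. \<forall>x\<in>X k. \<forall>y\<in>X k. dist x y < d1 \<longrightarrow> dist (fiter f k i x) (fiter f k i y) < e"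
    using Suc.IH by blast
  moreover obtain d2 where "d2 > 0"
    and "\<forall>k. \<forall>x\<in>X k. \<forall>y\<in>X k. dist x y < d2 \<longrightarrow> dist (fiter f k m x) (fiter f k m y) < e"
    using uniformly_equicontinuous_fiter[OF assms] by blast
  ultimately show ?case by (intro exI[of _ "min d1 d2"]) (auto simp: less_Suc_eq)
qed

subsection \<open>Finite Borel partitions and their joins\<close>

lemma borel_partition_finite: "borel_partition S P \<Longrightarrow> finite P"
  by (simp add: borel_partition_def)

lemma borel_partition_Union: "borel_partition S P \<Longrightarrow> \<Union>P = S"
  by (simp add: borel_partition_def)

lemma borel_partition_sets: "borel_partition S P \<Longrightarrow> A \<in> P \<Longrightarrow> A \<in> sets (restrict_space borel S)"
  by (simp add: borel_partition_def)

lemma borel_partition_not_empty: "borel_partition S P \<Longrightarrow> {} \<notin> P"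
  by (simp add: borel_partition_def)

lemma borel_partition_eqI:
  "borel_partition S P \<Longrightarrow> A \<in> P \<Longrightarrow> B \<in> P \<Longrightarrow> x \<in> A \<Longrightarrow> x \<in> B \<Longrightarrow> A = B"
  unfolding borel_partition_def by auto

lemma borel_partition_cover:
  assumes "borel_partition S P" "x \<in> S"
  obtains A where "A \<in> P" "x \<in> A"
  using assms borel_partition_Union by blast

lemma borel_partition_singleton: "S \<noteq> {} \<Longrightarrow> borel_partition S {S}"
  unfolding borel_partition_def using space_in_sets_restrict_borel by auto

lemma finite_join: "finite P \<Longrightarrow> finite Q \<Longrightarrow> finite (Defs.join P Q)"
  unfolding Defs.join_def by (rule finite_Diff, rule finite_subset[of _ "(\<lambda>(A, B). A \<inter> B) ` (P \<times> Q)"]) auto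

lemma card_join_le:
  assumes "finite P" "finite Q"
  shows "card (Defs.join P Q) \<le> card P * card Q"
proof -
  have "card (Defs.join P Q) \<le> card ((\<lambda>(A, B). A \<inter> B) ` (P \<times> Q))"
    using assms unfolding Defs.join_def by (intro card_mono) auto
  also have "\<dots> \<le> card (P \<times> Q)"
    using assms by (intro card_image_le) auto
  finally show ?thesis by (simp add: card_cartesian_product)
qed

lemma finite_preim_part: "finite P \<Longrightarrow> finite (preim_part S g P)"
  unfolding preim_part_def by (rule finite_Diff, rule finite_subset[of _ "(\<lambda>A. g -` A \<inter> S) ` P"]) auto

lemma card_preim_part_le:
  assumes "finite P"
  shows "card (preim_part S g P) \<le> card P"
proof -
  have "card (preim_part S g P) \<le> card ((\<lambda>A. g -` A \<inter> S) ` P)"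
    using assms unfolding preim_part_def by (intro card_mono) auto
  also have "\<dots> \<le> card P"
    using assms by (rule card_image_le)
  finally show ?thesis .
qed

lemma borel_partition_join:
  assumes P: "borel_partition S P" and Q: "borel_partition S Q"
  shows "borel_partition S (Defs.join P Q)"
  unfolding borel_partition_def
proof (intro conjI ballI impI)
  show "finite (Defs.join P Q)"
    using P Q by (intro finite_join borel_partition_finite)
  show "\<Union>(Defs.join P Q) = S"
    using borel_partition_Union[OF P] borel_partition_Union[OF Q] unfolding Defs.join_def by blast
  show "{} \<notin> Defs.join P Q"
    unfolding Defs.join_def by blast
next
  fix U assume "U \<in> Defs.join P Q"
  then obtain A B where "U = A \<inter> B" "A \<in> P" "B \<in> Q"
    unfolding Defs.join_def by blast
  then show "U \<in> sets (restrict_space borel S)"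
    using borel_partition_sets[OF P] borel_partition_sets[OF Q] by blast
next
  fix U V assume "U \<in> Defs.join P Q" "V \<in> Defs.join P Q" "U \<noteq> V"
  then obtain A B A' B' where "U = A \<inter> B" "V = A' \<inter> B'" "A \<in> P" "A' \<in> P" "B \<in> Q" "B' \<in> Q"
    unfolding Defs.join_def by blast
  with \<open>U \<noteq> V\<close> show "U \<inter> V = {}"
    using borel_partition_eqI[OF P] borel_partition_eqI[OF Q] by blast
qed

lemma borel_partition_preim_part:
  assumes P: "borel_partition T P"
    and g: "g \<in> measurable (restrict_space borel S) (restrict_space borel T)" "g ` S \<subseteq> T"
  shows "borel_partition S (preim_part S g P)"
  unfolding borel_partition_def
proof (intro conjI ballI impI)
  show "finite (preim_part S g P)"
    using P by (intro finite_preim_part borel_partition_finite)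
  show "\<Union>(preim_part S g P) = S"
    using borel_partition_Union[OF P] g(2) unfolding preim_part_def by blast
  show "{} \<notin> preim_part S g P"
    unfolding preim_part_def by blast
next
  fix U assume "U \<in> preim_part S g P"
  then obtain A where "U = g -` A \<inter> S" "A \<in> P"
    unfolding preim_part_def by blast
  then show "U \<in> sets (restrict_space borel S)"
    using measurable_sets[OF g(1) borel_partition_sets[OF P]] by (simp add: space_restrict_space)
next
  fix U V assume "U \<in> preim_part S g P" "V \<in> preim_part S g P" "U \<noteq> V"
  then obtain A B where "U = g -` A \<inter> S" "V = g -` B \<inter> S" "A \<in> P" "B \<in> P"
    unfolding preim_part_def by blast
  with \<open>U \<noteq> V\<close> show "U \<inter> V = {}"
    using borel_partition_eqI[OF P] by blast
qed

lemma card_le_if_coarser: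
  assumes P: "borel_partition S P" and Q: "borel_partition S Q" and "coarser Q P"
  shows "card Q \<le> card P"
proof -
  define h where "h A = (SOME B. B \<in> Q \<and> A \<subseteq> B)" for A
  have h: "h A \<in> Q \<and> A \<subseteq> h A" if "A \<in> P" for A
    using someI_ex[of "\<lambda>B. B \<in> Q \<and> A \<subseteq> B"] \<open>coarser Q P\<close> that
    unfolding h_def coarser_def by blast
  have "Q \<subseteq> h ` P"
  proof
    fix B assume "B \<in> Q"
    then have "B \<noteq> {}"
      using borel_partition_not_empty[OF Q] by blast
    then obtain b where "b \<in> B"
      by blast
    then obtain A where "A \<in> P" "b \<in> A"
      using borel_partition_Union[OF P] borel_partition_Union[OF Q] \<open>B \<in> Q\<close> by blast
    then have "h A = B"
      using h borel_partition_eqI[OF Q] \<open>B \<in> Q\<close> \<open>b \<in> B\<close> by blast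
    then show "B \<in> h ` P" using \<open>A \<in> P\<close> by blast
  qed
  then have "card Q \<le> card (h ` P)"
    using borel_partition_finite[OF P] by (intro card_mono) auto
  also have "\<dots> \<le> card P"
    using borel_partition_finite[OF P] by (rule card_image_le)
  finally show ?thesis .
qed

lemma finite_bigjoin: "(\<And>n. finite (P n)) \<Longrightarrow> finite (bigjoin X f P k m)"
  by (induction m) (simp_all add: finite_join finite_preim_part)

lemma card_bigjoin_le:
  assumes "\<And>n. finite (P n)" "\<And>n. card (P n) \<le> N"
  shows "card (bigjoin X f P k m) \<le> N ^ m"
proof (induction m)
  case (Suc m)
  have "card (bigjoin X f P k (Suc m))
      \<le> card (bigjoin X f P k m) * card (preim_part (X k) (fiter f k m) (P (k + m)))"
    using card_join_le[OF finite_bigjoin[OF assms(1)] finite_preim_part[OF assms(1)]] by simp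
  also have "\<dots> \<le> N ^ m * N"
    using Suc.IH le_trans[OF card_preim_part_le[OF assms(1)] assms(2)] by (intro mult_mono) auto
  finally show ?case by (simp add: mult.commute)
qed simp

lemma borel_partition_bigjoin:
  assumes "nds X f" "partition_seq X P" "X k \<noteq> {}"
  shows "borel_partition (X k) (bigjoin X f P k m)"
proof (induction m)
  case 0
  then show ?case using borel_partition_singleton[OF assms(3)] by simp
next
  case (Suc m)
  have "borel_partition (X (k + m)) (P (k + m))"
    using assms(2) unfolding partition_seq_def by blast
  then have "borel_partition (X k) (preim_part (X k) (fiter f k m) (P (k + m)))"
    by (rule borel_partition_preim_part[OF _ fiter_measurable[OF assms(1)]])
      (use fiter_in[OF assms(1)] in auto)
  then show ?case using borel_partition_join[OF Suc.IH] by simp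
qed

lemma mem_bigjoin_if_same_itinerary:
  assumes "partition_seq X P" "D \<in> bigjoin X f P k m" "x \<in> D" "y \<in> X k"
    "\<forall>i<m. \<exists>A\<in>P (k + i). fiter f k i x \<in> A \<and> fiter f k i y \<in> A"
  shows "y \<in> D"
  using assms(2,3,5)
proof (induction m arbitrary: D)
  case 0
  then show ?case using assms(4) by simp
next
  case (Suc m)
  obtain D0 A where D: "D = D0 \<inter> (fiter f k m -` A \<inter> X k)" "D0 \<in> bigjoin X f P k m" "A \<in> P (k + m)"
    using Suc.prems(1) by (auto simp: Defs.join_def preim_part_def)
  have "y \<in> D0"
    using Suc.IH[OF D(2)] Suc.prems D(1) by auto
  obtain A' where "A' \<in> P (k + m)" "fiter f k m x \<in> A'" "fiter f k m y \<in> A'"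
    using Suc.prems(3) by auto
  moreover have "fiter f k m x \<in> A"
    using Suc.prems(2) D(1) by blast
  ultimately have "A' = A"
    using assms(1) D(3) borel_partition_eqI unfolding partition_seq_def by metis
  then show ?case
    using D(1) \<open>y \<in> D0\<close> \<open>fiter f k m y \<in> A'\<close> assms(4) by blast
qed

subsection \<open>Separating cores\<close>

definition separated_on :: "'a::metric_space set \<Rightarrow> real \<Rightarrow> 'a set set \<Rightarrow> bool" where
  "separated_on G \<delta> P \<longleftrightarrow> (\<forall>A\<in>P. \<forall>B\<in>P. A \<noteq> B \<longrightarrow> (\<forall>x\<in>A \<inter> G. \<forall>y\<in>B \<inter> G. \<delta> \<le> dist x y))"

definition has_separating_cores ::
  "(nat \<Rightarrow> 'a::metric_space set) \<Rightarrow> (nat \<Rightarrow> 'a measure) \<Rightarrow> (nat \<Rightarrow> 'a set set) \<Rightarrow> bool" where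
  "has_separating_cores X \<mu> P \<longleftrightarrow> (\<forall>\<epsilon>>0. \<exists>\<delta>>0. \<exists>G. \<forall>n.
     closed (G n) \<and> G n \<subseteq> X n \<and> measure (\<mu> n) (X n - G n) \<le> \<epsilon> \<and> separated_on (G n) \<delta> (P n))"

lemma has_separating_coresE:
  assumes "has_separating_cores X \<mu> P" "\<epsilon> > 0"
  obtains \<delta> G where "\<delta> > 0" "\<And>n. closed (G n)" "\<And>n. G n \<subseteq> X n"
    "\<And>n. measure (\<mu> n) (X n - G n) \<le> \<epsilon>" "\<And>n. separated_on (G n) \<delta> (P n)"
proof -
  obtain \<delta> G where "\<delta> > 0" and G: "\<forall>n. closed (G n) \<and> G n \<subseteq> X n \<and>
      measure (\<mu> n) (X n - G n) \<le> \<epsilon> \<and> separated_on (G n) \<delta> (P n)"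
    using assms unfolding has_separating_cores_def by blast
  then show thesis
    by (intro that[of \<delta> G]) auto
qed

lemma separated_onD:
  "separated_on G \<delta> P \<Longrightarrow> A \<in> P \<Longrightarrow> B \<in> P \<Longrightarrow> A \<noteq> B \<Longrightarrow> x \<in> A \<inter> G \<Longrightarrow> y \<in> B \<inter> G \<Longrightarrow> \<delta> \<le> dist x y"
  unfolding separated_on_def by blast

lemma closed_Int_if_separated_on:
  assumes "closed G" "G \<subseteq> \<Union>P" "separated_on G \<delta> P" "\<delta> > 0" "A \<in> P"
  shows "closed (A \<inter> G)"
  unfolding closed_limpt
proof (intro allI impI)
  fix x assume x: "x islimpt A \<inter> G"
  then have "x \<in> G"
    using assms(1) closed_limpt islimpt_subset by blast
  then obtain B where "B \<in> P" "x \<in> B"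
    using assms(2) by blast
  obtain y where "y \<in> A \<inter> G" "dist y x < \<delta>"
    using x assms(4) unfolding islimpt_approachable by blast
  then have "B = A"
    using separated_onD[OF assms(3) assms(5) \<open>B \<in> P\<close>] \<open>x \<in> B\<close> \<open>x \<in> G\<close> by force
  then show "x \<in> A \<inter> G"
    using \<open>x \<in> B\<close> \<open>x \<in> G\<close> by blast
qed

lemma separating_core_of_compacts:
  fixes M :: "'a::metric_space measure" and e :: real
  assumes M: "borel_probability_on S M" and P: "borel_partition S P"
    and C: "\<And>A. A \<in> P \<Longrightarrow> C A \<subseteq> A \<and> compact (C A) \<and> measure M (A - C A) \<le> e"
    and sep: "\<And>A B x y. A \<in> P \<Longrightarrow> B \<in> P \<Longrightarrow> A \<noteq> B \<Longrightarrow> x \<in> C A \<Longrightarrow> y \<in> C B \<Longrightarrow> \<delta> \<le> dist x y"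
  shows "closed (\<Union>(C ` P)) \<and> \<Union>(C ` P) \<subseteq> S \<and> measure M (S - \<Union>(C ` P)) \<le> real (card P) * e \<and>
    separated_on (\<Union>(C ` P)) \<delta> P"
proof -
  interpret prob_space M
    using M unfolding borel_probability_on_def by blast
  have sets_M: "sets M = sets (restrict_space borel S)"
    using M unfolding borel_probability_on_def by blast
  have closed: "closed (\<Union>(C ` P))"
    using C borel_partition_finite[OF P] by (intro closed_Union compact_imp_closed) auto
  have subset: "\<Union>(C ` P) \<subseteq> S"
    using C borel_partition_Union[OF P] by blast
  have diff_sets: "A - C A \<in> sets M" if "A \<in> P" for A
    using that borel_partition_sets[OF P] closed_in_sets_restrict_borel[of "C A" S]
      C[OF that] borel_partition_Union[OF P] sets_M
    by (auto intro!: compact_imp_closed)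
  have "measure M (S - \<Union>(C ` P)) \<le> measure M (\<Union>A\<in>P. A - C A)"
    using borel_partition_Union[OF P] borel_partition_finite[OF P] diff_sets
    by (intro finite_measure_mono) auto
  also have "\<dots> \<le> (\<Sum>A\<in>P. measure M (A - C A))"
    using borel_partition_finite[OF P] diff_sets by (intro finite_measure_subadditive_finite) auto
  also have "\<dots> \<le> real (card P) * e"
    using C by (intro sum_bounded_above) auto
  finally have measure: "measure M (S - \<Union>(C ` P)) \<le> real (card P) * e" .
  have separated: "separated_on (\<Union>(C ` P)) \<delta> P"
    unfolding separated_on_def
  proof (intro ballI impI)
    fix A B x y assume "A \<in> P" "B \<in> P" "A \<noteq> B" "x \<in> A \<inter> \<Union>(C ` P)" "y \<in> B \<inter> \<Union>(C ` P)"
    moreover from this obtain A' B' where "A' \<in> P" "x \<in> C A'" "B' \<in> P" "y \<in> C B'"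
      by blast
    ultimately have "A' = A" "B' = B"
      using C borel_partition_eqI[OF P] by (metis IntD1 subsetD)+
    then show "\<delta> \<le> dist x y"
      using sep \<open>A \<noteq> B\<close> \<open>A' \<in> P\<close> \<open>B' \<in> P\<close> \<open>x \<in> C A'\<close> \<open>y \<in> C B'\<close> by blast
  qed
  show ?thesis
    using closed subset measure separated by blast
qed

lemma misiurewicz_class_has_separating_cores:
  assumes \<mu>: "\<And>n. borel_probability_on (X n) (\<mu> n)" and P: "P \<in> misiurewicz_class X \<mu>"
  shows "has_separating_cores X \<mu> P"
  unfolding has_separating_cores_def
proof (intro allI impI)
  fix \<epsilon> :: real assume "\<epsilon> > 0"
  obtain N :: nat where N: "\<And>n. card (P n) \<le> N" and Pb: "\<And>n. borel_partition (X n) (P n)"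
    using P unfolding misiurewicz_class_def partition_seq_def by blast
  define e where "e = \<epsilon> / (N + 1)"
  have "e > 0" using \<open>\<epsilon> > 0\<close> unfolding e_def by simp
  then obtain \<delta> C where "\<delta> > 0" and C: "\<forall>n. \<forall>A\<in>P n.
      C n A \<subseteq> A \<and> compact (C n A) \<and> measure (\<mu> n) (A - C n A) \<le> e \<and>
      (\<forall>B\<in>P n. A \<noteq> B \<longrightarrow> (\<forall>x\<in>C n A. \<forall>y\<in>C n B. dist x y \<ge> \<delta>))"
    using P unfolding misiurewicz_class_def by blast
  define G where "G n = \<Union>(C n ` P n)" for n
  have core: "closed (G n) \<and> G n \<subseteq> X n \<and> measure (\<mu> n) (X n - G n) \<le> real (card (P n)) * e \<and>
      separated_on (G n) \<delta> (P n)" for n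
  proof -
    have Cn: "\<And>A. A \<in> P n \<Longrightarrow> C n A \<subseteq> A \<and> compact (C n A) \<and> measure (\<mu> n) (A - C n A) \<le> e"
      using C by blast
    have sep: "\<And>A B x y. A \<in> P n \<Longrightarrow> B \<in> P n \<Longrightarrow> A \<noteq> B \<Longrightarrow> x \<in> C n A \<Longrightarrow> y \<in> C n B \<Longrightarrow> \<delta> \<le> dist x y"
      using C by blast
    show ?thesis
      unfolding G_def by (rule separating_core_of_compacts[OF \<mu> Pb Cn sep])
  qed
  have "real (card (P n)) * e \<le> \<epsilon>" for n
  proof -
    have "real (card (P n)) * e \<le> (N + 1) * e"
      using N[of n] \<open>e > 0\<close> by (intro mult_right_mono) auto
    then show ?thesis unfolding e_def by simp
  qed
  then have "measure (\<mu> n) (X n - G n) \<le> \<epsilon>" for n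
    using core[of n] order_trans by blast
  with core \<open>\<delta> > 0\<close> show "\<exists>\<delta>>0. \<exists>G. \<forall>n. closed (G n) \<and> G n \<subseteq> X n \<and> measure (\<mu> n) (X n - G n) \<le> \<epsilon> \<and>
      separated_on (G n) \<delta> (P n)"
    by blast
qed

lemma misiurewicz_classI:
  assumes \<mu>: "\<And>n. borel_probability_on (X n) (\<mu> n)" and X: "\<And>n. compact (X n)"
    and P: "partition_seq X P" "\<And>n. card (P n) \<le> N" "has_separating_cores X \<mu> P"
  shows "P \<in> misiurewicz_class X \<mu>"
  unfolding misiurewicz_class_def mem_Collect_eq
proof (intro conjI allI impI)
  show "partition_seq X P" "\<exists>N. \<forall>n. card (P n) \<le> N"
    using P by blast+
  fix \<epsilon> :: real assume "\<epsilon> > 0"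
  then obtain \<delta> G where "\<delta> > 0" and G: "\<And>n. closed (G n)" "\<And>n. G n \<subseteq> X n"
      "\<And>n. measure (\<mu> n) (X n - G n) \<le> \<epsilon>" "\<And>n. separated_on (G n) \<delta> (P n)"
    using has_separating_coresE[OF P(3)] by blast
  have Pb: "borel_partition (X n) (P n)" for n
    using P(1) unfolding partition_seq_def by blast
  have "compact (A \<inter> G n)" if "A \<in> P n" for n A
  proof -
    have "closed (A \<inter> G n)"
      using G borel_partition_Union[OF Pb] \<open>\<delta> > 0\<close> that by (intro closed_Int_if_separated_on) auto
    then have "compact (X n \<inter> (A \<inter> G n))"
      using X by (rule compact_Int_closed[rotated])
    then show ?thesis
      using G(2) by (simp add: Int_absorb1 le_infI2)
  qed
  moreover have "measure (\<mu> n) (A - A \<inter> G n) \<le> \<epsilon>" if "A \<in> P n" for n A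
  proof -
    interpret prob_space "\<mu> n"
      using \<mu> unfolding borel_probability_on_def by blast
    have "X n - G n \<in> sets (restrict_space borel (X n))"
      using space_in_sets_restrict_borel closed_in_sets_restrict_borel[OF G(1,2)] by (rule sets.Diff)
    then have "X n - G n \<in> sets (\<mu> n)"
      using \<mu>[of n] unfolding borel_probability_on_def by simp
    then have "measure (\<mu> n) (A - A \<inter> G n) \<le> measure (\<mu> n) (X n - G n)"
      using borel_partition_Union[OF Pb] that by (intro finite_measure_mono) auto
    then show ?thesis using G(3) by (rule order_trans)
  qed
  ultimately have "\<exists>C :: nat \<Rightarrow> 'a set \<Rightarrow> 'a set. \<forall>n. \<forall>A\<in>P n.
      C n A \<subseteq> A \<and> compact (C n A) \<and> measure (\<mu> n) (A - C n A) \<le> \<epsilon> \<and>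
      (\<forall>B\<in>P n. A \<noteq> B \<longrightarrow> (\<forall>x\<in>C n A. \<forall>y\<in>C n B. dist x y \<ge> \<delta>))"
    using separated_onD[OF G(4)] by (intro exI[of _ "\<lambda>n A. A \<inter> G n"]) blast
  with \<open>\<delta> > 0\<close> show "\<exists>\<delta>>0. \<exists>C :: nat \<Rightarrow> 'a set \<Rightarrow> 'a set. \<forall>n. \<forall>A\<in>P n.
      C n A \<subseteq> A \<and> compact (C n A) \<and> measure (\<mu> n) (A - C n A) \<le> \<epsilon> \<and>
      (\<forall>B\<in>P n. A \<noteq> B \<longrightarrow> (\<forall>x\<in>C n A. \<forall>y\<in>C n B. dist x y \<ge> \<delta>))"
    by blast
qed

subsection \<open>Coarsening and joining preserve separating cores\<close>

lemma has_separating_cores_singletons: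
  assumes "\<And>n. closed (X n)"
  shows "has_separating_cores X \<mu> (\<lambda>n. {X n})"
  unfolding has_separating_cores_def separated_on_def
  using assms by (intro allI impI exI[of _ 1] conjI exI[of _ X]) auto

lemma separated_on_coarser:
  assumes P: "borel_partition S P" and Q: "borel_partition S Q" and "coarser Q P" "G \<subseteq> S"
    and sep: "separated_on G \<delta> P"
  shows "separated_on G \<delta> Q"
  unfolding separated_on_def
proof (intro ballI impI)
  fix B B' x y assume "B \<in> Q" "B' \<in> Q" "B \<noteq> B'" "x \<in> B \<inter> G" "y \<in> B' \<inter> G"
  moreover obtain A A' where "A \<in> P" "x \<in> A" "A' \<in> P" "y \<in> A'"
    using borel_partition_Union[OF P] \<open>G \<subseteq> S\<close> \<open>x \<in> B \<inter> G\<close> \<open>y \<in> B' \<inter> G\<close> by blast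
  moreover have "A \<noteq> A'"
  proof
    assume "A = A'"
    obtain B'' where "B'' \<in> Q" "A \<subseteq> B''"
      using \<open>coarser Q P\<close> \<open>A \<in> P\<close> unfolding coarser_def by blast
    then have "B'' = B" "B'' = B'"
      using borel_partition_eqI[OF Q] \<open>A = A'\<close> \<open>B \<in> Q\<close> \<open>B' \<in> Q\<close> \<open>x \<in> A\<close> \<open>y \<in> A'\<close>
        \<open>x \<in> B \<inter> G\<close> \<open>y \<in> B' \<inter> G\<close> by blast+
    then show False using \<open>B \<noteq> B'\<close> by simp
  qed
  ultimately show "\<delta> \<le> dist x y"
    using separated_onD[OF sep] by blast
qed

lemma has_separating_cores_coarser:
  assumes "partition_seq X P" "partition_seq X Q" "\<And>n. coarser (Q n) (P n)"
    and "has_separating_cores X \<mu> P"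
  shows "has_separating_cores X \<mu> Q"
  unfolding has_separating_cores_def
proof (intro allI impI)
  fix \<epsilon> :: real assume "\<epsilon> > 0"
  then obtain \<delta> G where "\<delta> > 0" and G: "\<forall>n. closed (G n) \<and> G n \<subseteq> X n \<and>
      measure (\<mu> n) (X n - G n) \<le> \<epsilon> \<and> separated_on (G n) \<delta> (P n)"
    using assms(4) unfolding has_separating_cores_def by blast
  have "separated_on (G n) \<delta> (Q n)" for n
    using assms(1-3) G unfolding partition_seq_def by (blast intro: separated_on_coarser)
  with G \<open>\<delta> > 0\<close> show "\<exists>\<delta>>0. \<exists>G. \<forall>n. closed (G n) \<and> G n \<subseteq> X n \<and> measure (\<mu> n) (X n - G n) \<le> \<epsilon> \<and>
      separated_on (G n) \<delta> (Q n)"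
    by blast
qed

definition itinerary_core ::
  "(nat \<Rightarrow> 'a set) \<Rightarrow> (nat \<Rightarrow> 'a \<Rightarrow> 'a) \<Rightarrow> (nat \<Rightarrow> 'a set) \<Rightarrow> nat \<Rightarrow> nat \<Rightarrow> 'a set" where
  "itinerary_core X f G k m = X k \<inter> (\<Inter>i<m. fiter f k i -` G (k + i))"

lemma closed_itinerary_core:
  assumes "nds X f" "\<And>n. closed (G n)"
  shows "closed (itinerary_core X f G k m)"
proof -
  have closed_X: "closed (X k)"
    using assms(1) unfolding nds_def by (blast intro: compact_imp_closed)
  have "closed (X k \<inter> fiter f k i -` G (k + i))" for i
    by (rule continuous_closed_preimage[OF continuous_on_fiter[OF assms(1)] closed_X assms(2)])
  then have "closed (X k \<inter> (\<Inter>i<m. X k \<inter> fiter f k i -` G (k + i)))"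
    using closed_X by (intro closed_Int closed_INT) auto
  moreover have "X k \<inter> (\<Inter>i<m. X k \<inter> fiter f k i -` G (k + i)) = itinerary_core X f G k m"
    unfolding itinerary_core_def by blast
  ultimately show ?thesis by simp
qed

lemma measure_diff_itinerary_core_le:
  assumes "nds X f" "invariant_measures X f \<mu>" "\<And>n. closed (G n)" "\<And>n. G n \<subseteq> X n"
  shows "measure (\<mu> k) (X k - itinerary_core X f G k m)
    \<le> (\<Sum>i<m. measure (\<mu> (k + i)) (X (k + i) - G (k + i)))"
proof -
  have sets_\<mu>: "sets (\<mu> n) = sets (restrict_space borel (X n))" for n
    using assms(2) unfolding invariant_measures_def by blast
  interpret prob_space "\<mu> k"
    using assms(2) unfolding invariant_measures_def by blast
  define E where "E i = X (k + i) - G (k + i)" for i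
  have E: "E i \<in> sets (restrict_space borel (X (k + i)))" for i
    unfolding E_def using space_in_sets_restrict_borel closed_in_sets_restrict_borel[OF assms(3,4)]
    by (rule sets.Diff)
  have "X k - itinerary_core X f G k m = (\<Union>i<m. fiter f k i -` E i \<inter> X k)"
    unfolding itinerary_core_def E_def using fiter_in[OF assms(1)] by auto
  also have "measure (\<mu> k) \<dots> \<le> (\<Sum>i<m. measure (\<mu> k) (fiter f k i -` E i \<inter> X k))"
    using fiter_preimage_in_sets[OF assms(1) E] sets_\<mu>
    by (intro finite_measure_subadditive_finite) auto
  also have "\<dots> = (\<Sum>i<m. measure (\<mu> (k + i)) (E i))"
    using measure_fiter_preimage[OF assms(1,2) E] by simp
  finally show ?thesis unfolding E_def .
qed

lemma separated_on_bigjoin: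
  assumes "nds X f" "partition_seq X P" "\<And>n. G n \<subseteq> X n"
    and close: "\<And>i x y. i < m \<Longrightarrow> x \<in> X k \<Longrightarrow> y \<in> X k \<Longrightarrow> dist x y < \<delta>' \<Longrightarrow>
      dist (fiter f k i x) (fiter f k i y) < \<delta>"
    and sep: "\<And>i. i < m \<Longrightarrow> separated_on (G (k + i)) \<delta> (P (k + i))"
  shows "separated_on (itinerary_core X f G k m) \<delta>' (bigjoin X f P k m)"
  unfolding separated_on_def
proof (intro ballI impI)
  fix D D' x y
  assume D: "D \<in> bigjoin X f P k m" "D' \<in> bigjoin X f P k m" "D \<noteq> D'"
    and x: "x \<in> D \<inter> itinerary_core X f G k m" and y: "y \<in> D' \<inter> itinerary_core X f G k m"
  have Pb: "borel_partition (X n) (P n)" for n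
    using assms(2) unfolding partition_seq_def by blast
  show "\<delta>' \<le> dist x y"
  proof (rule ccontr)
    assume "\<not> \<delta>' \<le> dist x y"
    have "\<exists>A\<in>P (k + i). fiter f k i x \<in> A \<and> fiter f k i y \<in> A" if "i < m" for i
    proof -
      have in_G: "fiter f k i x \<in> G (k + i)" "fiter f k i y \<in> G (k + i)"
        using x y that unfolding itinerary_core_def by blast+
      obtain A where A: "A \<in> P (k + i)" "fiter f k i x \<in> A"
        using borel_partition_cover[OF Pb] in_G(1) assms(3) by blast
      obtain B where B: "B \<in> P (k + i)" "fiter f k i y \<in> B"
        using borel_partition_cover[OF Pb] in_G(2) assms(3) by blast
      have "dist (fiter f k i x) (fiter f k i y) < \<delta>"
        using close that x y \<open>\<not> \<delta>' \<le> dist x y\<close> unfolding itinerary_core_def by simp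
      moreover have "A \<noteq> B \<Longrightarrow> \<delta> \<le> dist (fiter f k i x) (fiter f k i y)"
        using separated_onD[OF sep[OF that] A(1) B(1)] A(2) B(2) in_G by blast
      ultimately have "A = B" by linarith
      then show ?thesis
        using A B by blast
    qed
    then have "y \<in> D"
      using mem_bigjoin_if_same_itinerary[OF assms(2) D(1)] x y unfolding itinerary_core_def by blast
    moreover have "borel_partition (X k) (bigjoin X f P k m)"
      using x unfolding itinerary_core_def by (intro borel_partition_bigjoin assms(1,2)) blast
    ultimately have "D' = D"
      using borel_partition_eqI[OF _ D(2) D(1)] y by blast
    then show False
      using D(3) by simp
  qed
qed

lemma has_separating_cores_bigjoin:
  assumes "nds X f" "invariant_measures X f \<mu>" "equicontinuous_nds X f" "partition_seq X P"
    and "has_separating_cores X \<mu> P"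
  shows "has_separating_cores X \<mu> (\<lambda>k. bigjoin X f P k m)"
  unfolding has_separating_cores_def
proof (intro allI impI)
  fix \<epsilon> :: real assume "\<epsilon> > 0"
  then have "\<epsilon> / (m + 1) > 0" by simp
  then obtain \<delta> G where "\<delta> > 0" and G: "\<And>n. closed (G n)" "\<And>n. G n \<subseteq> X n"
      "\<And>n. measure (\<mu> n) (X n - G n) \<le> \<epsilon> / (m + 1)" "\<And>n. separated_on (G n) \<delta> (P n)"
    using has_separating_coresE[OF assms(5)] by blast
  obtain \<delta>' where "\<delta>' > 0" and \<delta>': "\<forall>i<m. \<forall>k. \<forall>x\<in>X k. \<forall>y\<in>X k.
      dist x y < \<delta>' \<longrightarrow> dist (fiter f k i x) (fiter f k i y) < \<delta>"
    using uniformly_equicontinuous_fiters[OF assms(1,3) \<open>\<delta> > 0\<close>] by blast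
  have core_measure: "measure (\<mu> k) (X k - itinerary_core X f G k m) \<le> \<epsilon>" for k
  proof -
    have "measure (\<mu> k) (X k - itinerary_core X f G k m)
        \<le> (\<Sum>i<m. measure (\<mu> (k + i)) (X (k + i) - G (k + i)))"
      by (rule measure_diff_itinerary_core_le[OF assms(1,2) G(1,2)])
    also have "\<dots> \<le> m * (\<epsilon> / (m + 1))"
      using sum_bounded_above[where A="{..<m}" and K="\<epsilon> / (m + 1)"] G(3) by simp
    also have "\<dots> \<le> \<epsilon>"
      using \<open>\<epsilon> > 0\<close> by (simp add: field_simps)
    finally show ?thesis .
  qed
  have core_separated: "separated_on (itinerary_core X f G k m) \<delta>' (bigjoin X f P k m)" for k
    by (rule separated_on_bigjoin[OF assms(1,4) G(2)]) (use \<delta>' G(4) in auto)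
  have core_closed: "closed (itinerary_core X f G k m)" for k
    by (rule closed_itinerary_core[OF assms(1) G(1)])
  have core_subset: "itinerary_core X f G k m \<subseteq> X k" for k
    unfolding itinerary_core_def by blast
  show "\<exists>\<delta>>0. \<exists>G. \<forall>k. closed (G k) \<and> G k \<subseteq> X k \<and> measure (\<mu> k) (X k - G k) \<le> \<epsilon> \<and>
      separated_on (G k) \<delta> (bigjoin X f P k m)"
    using \<open>\<delta>' > 0\<close> core_closed core_subset core_measure core_separated
    by (intro exI[of _ \<delta>'] conjI exI[of _ "\<lambda>k. itinerary_core X f G k m"] allI) simp_all
qed

subsection \<open>Closure properties of the Misiurewicz class\<close>

lemma misiurewicz_classD:
  assumes "P \<in> misiurewicz_class X \<mu>"
  shows "partition_seq X P" "\<exists>N. \<forall>n. card (P n) \<le> N"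
  using assms unfolding misiurewicz_class_def by blast+

lemma misiurewicz_class_singletons:
  assumes \<mu>: "\<And>n. borel_probability_on (X n) (\<mu> n)" and X: "\<And>n. compact (X n)"
  shows "(\<lambda>n. {X n}) \<in> misiurewicz_class X \<mu>"
proof (rule misiurewicz_classI[OF \<mu> X])
  show "partition_seq X (\<lambda>n. {X n})"
    unfolding partition_seq_def using borel_partition_singleton[OF borel_probability_on_nonempty[OF \<mu>]]
    by blast
  show "card {X n} \<le> 1" for n
    by simp
  show "has_separating_cores X \<mu> (\<lambda>n. {X n})"
    using X by (intro has_separating_cores_singletons compact_imp_closed)
qed

lemma misiurewicz_class_coarser:
  assumes \<mu>: "\<And>n. borel_probability_on (X n) (\<mu> n)" and X: "\<And>n. compact (X n)"
    and P: "P \<in> misiurewicz_class X \<mu>" and Q: "partition_seq X Q" "\<And>n. coarser (Q n) (P n)"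
  shows "Q \<in> misiurewicz_class X \<mu>"
proof -
  have P_part: "partition_seq X P"
    using P by (rule misiurewicz_classD)
  obtain N where N: "\<And>n. card (P n) \<le> N"
    using misiurewicz_classD(2)[OF P] by blast
  have "card (Q n) \<le> card (P n)" for n
    using P_part Q unfolding partition_seq_def by (intro card_le_if_coarser) auto
  then have "card (Q n) \<le> N" for n
    using N le_trans by blast
  moreover have "has_separating_cores X \<mu> Q"
    using P_part Q misiurewicz_class_has_separating_cores[OF \<mu> P] by (rule has_separating_cores_coarser)
  ultimately show ?thesis
    using Q(1) by (intro misiurewicz_classI[OF \<mu> X])
qed

lemma misiurewicz_class_bigjoin:
  assumes "nds X f" "invariant_measures X f \<mu>" "equicontinuous_nds X f"
    and P: "P \<in> misiurewicz_class X \<mu>"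
  shows "(\<lambda>k. bigjoin X f P k m) \<in> misiurewicz_class X \<mu>"
proof -
  have \<mu>: "borel_probability_on (X n) (\<mu> n)" for n
    using assms(2) by (rule invariant_measures_borel_probability_on)
  have X: "compact (X n)" for n
    using assms(1) unfolding nds_def by blast
  have P_part: "partition_seq X P"
    using P by (rule misiurewicz_classD)
  obtain N where N: "\<And>n. card (P n) \<le> N"
    using misiurewicz_classD(2)[OF P] by blast
  have finite: "finite (P n)" for n
    using P_part unfolding partition_seq_def by (blast intro: borel_partition_finite)
  have "partition_seq X (\<lambda>k. bigjoin X f P k m)"
    unfolding partition_seq_def
    using borel_partition_bigjoin[OF assms(1) P_part borel_probability_on_nonempty[OF \<mu>]] by blast
  moreover have "card (bigjoin X f P k m) \<le> N ^ m" for k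
    using finite N by (rule card_bigjoin_le)
  moreover have "has_separating_cores X \<mu> (\<lambda>k. bigjoin X f P k m)"
    using assms(1-3) P_part misiurewicz_class_has_separating_cores[where X=X and \<mu>=\<mu>, OF \<mu> P]
    by (rule has_separating_cores_bigjoin)
  ultimately show ?thesis
    by (rule misiurewicz_classI[where X=X and \<mu>=\<mu>, OF \<mu> X])
qed

theorem mainTheorem7:
  fixes X :: "nat \<Rightarrow> 'a::metric_space set"
    and f :: "nat \<Rightarrow> 'a \<Rightarrow> 'a"
    and \<mu> :: "nat \<Rightarrow> 'a measure"
  assumes "nds X f"
    and "invariant_measures X f \<mu>"
    and "equicontinuous_nds X f"
  shows "admissible_class X f (misiurewicz_class X \<mu>)"
proof -
  have \<mu>: "borel_probability_on (X n) (\<mu> n)" for n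
    using assms(2) by (rule invariant_measures_borel_probability_on)
  have X: "compact (X n)" for n
    using assms(1) unfolding nds_def by blast
  show ?thesis
    unfolding admissible_class_def
  proof (intro conjI ballI allI impI)
    show "misiurewicz_class X \<mu> \<noteq> {}"
      using misiurewicz_class_singletons[where X=X and \<mu>=\<mu>, OF \<mu> X] by auto
  next
    fix P assume P: "P \<in> misiurewicz_class X \<mu>"
    show "partition_seq X P" "\<exists>N. \<forall>n. card (P n) \<le> N"
      using misiurewicz_classD[OF P] by simp_all
    show "(\<lambda>k. bigjoin X f P k m) \<in> misiurewicz_class X \<mu>" for m
      by (rule misiurewicz_class_bigjoin[OF assms P])
    fix Q assume "partition_seq X Q \<and> (\<forall>n. coarser (Q n) (P n))"
    then show "Q \<in> misiurewicz_class X \<mu>"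
      by (intro misiurewicz_class_coarser[where X=X and \<mu>=\<mu>, OF \<mu> X P]) simp_all
  qed
qed

end
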